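(* Let $d \geq 1$ and $n \geq 0$ be integers and let $\mathbf{x} \in \mathbb{Z}^{n+1}_{\mathrm{prim}}$. Then the ball $\mathcal{B}_{N_{d,n}}(\|\mathbf{x}\|)$ contains $N_{d,n} - 1$ linearly independent vectors of the lattice $\Lambda_{\nu_{d,n}(\mathbf{x})}$.
   Context: $\|\cdot\|$ is the Euclidean norm and $\mathcal{B}_N(u) = \{\mathbf{y} \in \mathbb{R}^N : \|\mathbf{y}\| \leq u\}$. $\mathbb{Z}^{N}_{\mathrm{prim}}$ is the set of vectors in $\mathbb{Z}^N$ whose coordinates have gcd $1$. $N_{d,n} = \binom{n+d}{d}$ and $\nu_{d,n} : \mathbb{R}^{n+1} \to \mathbb{R}^{N_{d,n}}$ is the Veronese map listing all monomials of degree $d$ in the $n+1$ coordinates in lexicographic order. For $\mathbf{c} \in \mathbb{Z}^N$, $\Lambda_{\mathbf{c}} = \{\mathbf{y} \in \mathbb{Z}^N : \langle \mathbf{c}, \mathbf{y}\rangle = 0\}$, with $\langle\cdot,\cdot\rangle$ the Euclidean inner product. *)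

theory Defs
  imports Complex_Main
begin

text \<open>Vectors of \<open>\<int>^N\<close> / \<open>\<real>^N\<close> are represented as lists of length N.\<close>

definition vnorm :: "int list \<Rightarrow> real" where
  "vnorm y = sqrt (\<Sum>i<length y. (real_of_int (y ! i))\<^sup>2)"

definition primitive :: "int list \<Rightarrow> bool" where
  "primitive x \<longleftrightarrow> Gcd (set x) = 1"

definition N_dn :: "nat \<Rightarrow> nat \<Rightarrow> nat" where
  "N_dn d n = (n + d) choose d"

text \<open>Exponent vectors of length m with total degree d, in lexicographic order
  (x_0^d first).\<close>
fun exps :: "nat \<Rightarrow> nat \<Rightarrow> nat list list" where
  "exps 0 d = (if d = 0 then [[]] else [])"
| "exps (Suc m) d = concat (map (\<lambda>a. map (\<lambda>e. a # e) (exps m (d - a))) (rev [0..<Suc d]))"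

definition veronese :: "nat \<Rightarrow> nat \<Rightarrow> int list \<Rightarrow> int list" where
  "veronese d n x = map (\<lambda>e. \<Prod>i<Suc n. (x ! i) ^ (e ! i)) (exps (Suc n) d)"

definition iprod :: "int list \<Rightarrow> int list \<Rightarrow> int" where
  "iprod c y = (\<Sum>i<length c. c ! i * y ! i)"

definition Lambda :: "int list \<Rightarrow> int list set" where
  "Lambda c = {y. length y = length c \<and> iprod c y = 0}"

definition lin_indep :: "nat \<Rightarrow> int list list \<Rightarrow> bool" where
  "lin_indep N ys \<longleftrightarrow>
     (\<forall>a :: nat \<Rightarrow> real.
        (\<forall>j<N. (\<Sum>i<length ys. a i * real_of_int (ys ! i ! j)) = 0) \<longrightarrow>
        (\<forall>i<length ys. a i = 0))"

end

theory Submission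
  imports Defs
begin

text \<open>Pick a coordinate k with x_k \<noteq> 0. Every exponent f of degree d other than d e_k has
  f_i > 0 for some i \<noteq> k, and moving one unit of f from i to k gives an exponent f' with
  x^f x_k = x^f' x_i. Hence x_k e_f - x_i e_f' is a vector of the lattice, of length
  sqrt (x_k^2 + x_i^2) \<le> \<parallel>x\<parallel>. Since f' has a larger exponent of x_k than f, these
  N_{d,n} - 1 vectors form a triangular system, so they are linearly independent.\<close>

lemma set_exps: "set (exps m d) = {e. length e = m \<and> sum_list e = d}"
proof (induction m arbitrary: d)
  case 0
  then show ?case by auto
next
  case (Suc m)
  show ?case
  proof (intro set_eqI iffI)
    fix e
    assume "e \<in> set (exps (Suc m) d)"
    then show "e \<in> {e. length e = Suc m \<and> sum_list e = d}" using Suc by auto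
  next
    fix e
    assume "e \<in> {e. length e = Suc m \<and> sum_list e = d}"
    then obtain a e' where "e = a # e'" "length e' = m" "a + sum_list e' = d"
      by (cases e) auto
    then show "e \<in> set (exps (Suc m) d)" using Suc by force
  qed
qed

lemma distinct_exps: "distinct (exps m d)"
proof (induction m arbitrary: d)
  case 0
  then show ?case by simp
next
  case (Suc m)
  have "distinct (concat (map (\<lambda>a. map ((#) a) (G a)) as))"
    if "distinct as" "\<forall>a\<in>set as. distinct (G a)" for as :: "nat list" and G
    using that by (induction as) (auto simp: distinct_map)
  then show ?case
    unfolding exps.simps by this (auto simp: Suc)
qed

lemma length_exps_Suc: "length (exps (Suc m) d) = (\<Sum>a\<le>d. length (exps m (d - a)))"
proof -
  have "length (exps (Suc m) d) = sum_list (map (\<lambda>a. length (exps m (d - a))) (rev [0..<Suc d]))"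
    by (simp only: exps.simps length_concat map_map comp_def length_map)
  also have "\<dots> = (\<Sum>a\<le>d. length (exps m (d - a)))"
    by (subst sum_list_distinct_conv_sum_set)
      (simp, simp only: set_rev set_upt atLeast0LessThan lessThan_Suc_atMost)
  finally show ?thesis .
qed

lemma length_exps: "length (exps (Suc m) d) = (m + d) choose d"
proof (induction m arbitrary: d)
  case 0
  have "length (exps (Suc 0) d) = (\<Sum>a\<le>d. if a = d then 1 else 0)"
    unfolding length_exps_Suc by (rule sum.cong) auto
  then show ?case by simp
next
  case (Suc m)
  have "length (exps (Suc (Suc m)) d) = (\<Sum>a\<le>d. (m + (d - a)) choose (d - a))"
    by (subst length_exps_Suc) (simp only: Suc)
  also have "\<dots> = (\<Sum>b\<le>d. (m + b) choose b)"
    by (rule sum.reindex_bij_witness[of _ "\<lambda>b. d - b" "\<lambda>b. d - b"]) auto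
  also have "\<dots> = (Suc m + d) choose d"
    by (simp add: sum_choose_lower)
  finally show ?case .
qed

definition pure_power :: "nat \<Rightarrow> nat \<Rightarrow> nat \<Rightarrow> nat list" where
  "pure_power m k d = (replicate m 0)[k := d]"

definition exchange :: "nat \<Rightarrow> nat \<Rightarrow> nat list \<Rightarrow> nat list" where
  "exchange i k f = f[i := f ! i - 1, k := f ! k + 1]"

lemma exchange_nth_target: "k < length f \<Longrightarrow> exchange i k f ! k = f ! k + 1"
  by (simp add: exchange_def)

lemma pure_power_in_exps:
  assumes "k < m"
  shows "pure_power m k d \<in> set (exps m d)"
proof -
  have "sum_list (pure_power m k d) = sum_list (replicate m (0::nat)) + d - replicate m 0 ! k"
    unfolding pure_power_def using assms by (simp add: sum_list_update)
  then show ?thesis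
    using assms by (simp add: set_exps pure_power_def)
qed

lemma exps_not_pure_power:
  assumes f: "f \<in> set (exps m d)" and "k < m" and "f \<noteq> pure_power m k d"
  shows "\<exists>i<m. i \<noteq> k \<and> 0 < f ! i"
proof (rule ccontr)
  assume "\<not> ?thesis"
  then have zero: "\<forall>i<m. i \<noteq> k \<longrightarrow> f ! i = 0" by auto
  have len: "length f = m" and deg: "sum_list f = d" using f by (auto simp: set_exps)
  have "sum_list f = (\<Sum>i<m. f ! i)"
    using len by (simp add: sum_list_sum_nth atLeast0LessThan)
  also have "\<dots> = f ! k + (\<Sum>i\<in>{..<m} - {k}. f ! i)"
    using \<open>k < m\<close> by (intro sum.remove) auto
  also have "\<dots> = f ! k"
    using zero by simp
  finally have "f ! k = d" using deg by simp
  then have "f = pure_power m k d"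
    using len zero \<open>k < m\<close> by (intro nth_equalityI) (auto simp: pure_power_def nth_list_update)
  with assms show False by simp
qed

lemma exchange_in_exps:
  assumes f: "f \<in> set (exps m d)" and "i < m" "k < m" "i \<noteq> k" "0 < f ! i"
  shows "exchange i k f \<in> set (exps m d)"
proof -
  have len: "length f = m" and deg: "sum_list f = d" using f by (auto simp: set_exps)
  have "f ! i \<le> sum_list f"
    using assms len by (intro elem_le_sum_list) simp
  then have "sum_list (exchange i k f) = sum_list f"
    using assms len by (simp add: exchange_def sum_list_update nth_list_update)
  then show ?thesis
    using assms len deg by (simp add: set_exps exchange_def)
qed

definition monomial :: "int list \<Rightarrow> nat list \<Rightarrow> int" where
  "monomial x e = (\<Prod>t<length x. x ! t ^ e ! t)"

lemma veronese_eq_map_monomial: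
  "length x = Suc n \<Longrightarrow> veronese d n x = map (monomial x) (exps (Suc n) d)"
  by (simp add: veronese_def monomial_def)

lemma monomial_incr:
  assumes "j < length x" "length e = length x"
  shows "monomial x (e[j := e ! j + 1]) = monomial x e * x ! j"
proof -
  have "monomial x (e[j := e ! j + 1]) = x ! j ^ (e ! j + 1) * (\<Prod>t\<in>{..<length x} - {j}. x ! t ^ e ! t)"
    unfolding monomial_def using assms by (subst prod.remove[of _ j]) auto
  also have "monomial x e = x ! j ^ e ! j * (\<Prod>t\<in>{..<length x} - {j}. x ! t ^ e ! t)"
    unfolding monomial_def using assms by (subst prod.remove[of _ j]) auto
  ultimately show ?thesis by simp
qed

lemma monomial_exchange:
  assumes "length f = length x" "i < length x" "k < length x" "i \<noteq> k" "0 < f ! i"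
  shows "monomial x (exchange i k f) * x ! i = monomial x f * x ! k"
proof -
  define h where "h = f[i := f ! i - 1]"
  have "length h = length x" using assms by (simp add: h_def)
  moreover have "f = h[i := h ! i + 1]" and "exchange i k f = h[k := h ! k + 1]"
    using assms by (simp_all add: h_def exchange_def)
  ultimately have "monomial x f = monomial x h * x ! i"
    and "monomial x (exchange i k f) = monomial x h * x ! k"
    using assms by (metis monomial_incr)+
  then show ?thesis by simp
qed

definition two_point :: "'a \<Rightarrow> 'a \<Rightarrow> int \<Rightarrow> int \<Rightarrow> 'a \<Rightarrow> int" where
  "two_point f g a b h = (if h = f then a else if h = g then b else 0)"

lemma sum_two_point:
  fixes \<phi> :: "'a \<Rightarrow> int \<Rightarrow> 'b :: comm_monoid_add"
  assumes "finite S" "f \<in> S" "g \<in> S" "f \<noteq> g" "\<And>h. \<phi> h 0 = 0"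
  shows "(\<Sum>h\<in>S. \<phi> h (two_point f g a b h)) = \<phi> f a + \<phi> g b"
proof -
  have "(\<Sum>h\<in>S. \<phi> h (two_point f g a b h)) = (\<Sum>h\<in>{f, g}. \<phi> h (two_point f g a b h))"
    using assms by (intro sum.mono_neutral_right) (auto simp: two_point_def)
  then show ?thesis
    using assms by (simp add: two_point_def)
qed

lemma sum_nth_distinct: "distinct xs \<Longrightarrow> (\<Sum>p<length xs. h (xs ! p)) = sum h (set xs)"
  by (simp add: sum_list_distinct_conv_sum_set[symmetric] sum_list_sum_nth atLeast0LessThan)

lemma iprod_two_point:
  assumes "distinct E" "f \<in> set E" "g \<in> set E" "f \<noteq> g"
  shows "iprod (map c E) (map (two_point f g a b) E) = c f * a + c g * b"
  using assms sum_nth_distinct[of E "\<lambda>h. c h * two_point f g a b h"]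
    sum_two_point[of "set E" f g "\<lambda>h t. c h * t"]
  by (simp add: iprod_def)

lemma vnorm_two_point:
  assumes "distinct E" "f \<in> set E" "g \<in> set E" "f \<noteq> g"
  shows "vnorm (map (two_point f g a b) E) = sqrt ((real_of_int a)\<^sup>2 + (real_of_int b)\<^sup>2)"
  using assms sum_nth_distinct[of E "\<lambda>h. (real_of_int (two_point f g a b h))\<^sup>2"]
    sum_two_point[of "set E" f g "\<lambda>h t. (real_of_int t)\<^sup>2"]
  by (simp add: vnorm_def)

lemma vnorm_ge_two_coords:
  assumes "i < length x" "k < length x" "i \<noteq> k"
  shows "sqrt ((real_of_int (x ! k))\<^sup>2 + (real_of_int (x ! i))\<^sup>2) \<le> vnorm x"
proof -
  have "(\<Sum>t\<in>{k, i}. (real_of_int (x ! t))\<^sup>2) \<le> (\<Sum>t<length x. (real_of_int (x ! t))\<^sup>2)"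
    using assms by (intro sum_mono2) auto
  then show ?thesis
    using assms unfolding vnorm_def by (simp add: real_sqrt_le_mono)
qed

lemma exchange_vector:
  assumes f: "f \<in> set (exps m d)" and "length x = m" "i < m" "k < m" "i \<noteq> k" "0 < f ! i"
  defines "y \<equiv> map (two_point f (exchange i k f) (x ! k) (- x ! i)) (exps m d)"
  shows "y \<in> Lambda (map (monomial x) (exps m d))" and "vnorm y \<le> vnorm x"
proof -
  have f': "exchange i k f \<in> set (exps m d)"
    using assms by (intro exchange_in_exps)
  have len: "length f = m" using f by (simp add: set_exps)
  have ne: "f \<noteq> exchange i k f"
    using exchange_nth_target[of k f i] assms len by auto
  have "monomial x (exchange i k f) * x ! i = monomial x f * x ! k"
    using assms len by (intro monomial_exchange) auto
  then have "iprod (map (monomial x) (exps m d)) y = 0"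
    unfolding y_def using f f' ne by (simp add: iprod_two_point distinct_exps)
  then show "y \<in> Lambda (map (monomial x) (exps m d))"
    by (simp add: Lambda_def y_def)
  show "vnorm y \<le> vnorm x"
    unfolding y_def using f f' ne assms by (simp add: vnorm_two_point distinct_exps vnorm_ge_two_coords)
qed

lemma lin_indep_triangular:
  fixes E F :: "'a list" and v :: "'a \<Rightarrow> 'a \<Rightarrow> int" and w :: "'a \<Rightarrow> nat"
  assumes "distinct F" "set F \<subseteq> set E"
    and diag: "\<And>f. f \<in> set F \<Longrightarrow> v f f \<noteq> 0"
    and upper: "\<And>f g. f \<in> set F \<Longrightarrow> g \<noteq> f \<Longrightarrow> v f g \<noteq> 0 \<Longrightarrow> w f < w g"
  shows "lin_indep (length E) (map (\<lambda>f. map (v f) E) F)"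
  unfolding lin_indep_def
proof (intro allI impI)
  fix a :: "nat \<Rightarrow> real" and r
  assume comb: "\<forall>j<length E. (\<Sum>s<length (map (\<lambda>f. map (v f) E) F).
                  a s * real_of_int (map (\<lambda>f. map (v f) E) F ! s ! j)) = 0"
  assume "r < length (map (\<lambda>f. map (v f) E) F)"
  show "a r = 0"
  proof (rule ccontr)
    assume "a r \<noteq> 0"
    \<comment> \<open>the entry at the support point of minimal weight sees only one nonzero summand\<close>
    obtain r0 where r0: "r0 < length F" "a r0 \<noteq> 0"
      and least: "\<And>s. s < length F \<Longrightarrow> a s \<noteq> 0 \<Longrightarrow> w (F ! r0) \<le> w (F ! s)"
      using ex_has_least_nat[of "\<lambda>s. s < length F \<and> a s \<noteq> 0" r "\<lambda>s. w (F ! s)"]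
        \<open>a r \<noteq> 0\<close> \<open>r < _\<close> by auto
    define g where "g = F ! r0"
    have gF: "g \<in> set F" using r0 by (simp add: g_def)
    then obtain j where j: "j < length E" "E ! j = g"
      using assms(2) by (metis in_set_conv_nth subsetD)
    have others: "a s * real_of_int (v (F ! s) g) = 0" if s: "s \<in> {..<length F} - {r0}" for s
    proof -
      have "F ! s \<noteq> g" using s r0 \<open>distinct F\<close> by (auto simp: g_def nth_eq_iff_index_eq)
      moreover have "\<not> w (F ! s) < w g" if "a s \<noteq> 0"
        using least[of s] s that by (simp add: g_def)
      ultimately show ?thesis
        using upper[of "F ! s" g] s by fastforce
    qed
    have "0 = (\<Sum>s<length F. a s * real_of_int (v (F ! s) g))"
      using comb j by force
    also have "\<dots> = a r0 * real_of_int (v g g)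
        + (\<Sum>s\<in>{..<length F} - {r0}. a s * real_of_int (v (F ! s) g))"
      using r0 by (subst sum.remove[of _ r0]) (simp_all add: g_def)
    also have "\<dots> = a r0 * real_of_int (v g g)"
      using others by (simp add: sum.neutral)
    finally show False
      using r0 diag[OF gF] by simp
  qed
qed

lemma primitive_nonzero_coord:
  assumes "primitive x"
  obtains k where "k < length x" "x ! k \<noteq> 0"
proof -
  have "\<not> set x \<subseteq> {0}"
    using assms Gcd_0_iff[of "set x"] by (simp add: primitive_def)
  then show ?thesis
    using that by (metis in_set_conv_nth insertCI subsetI)
qed

lemma short_independent_lattice_vectors:
  fixes x :: "int list" and m k d :: nat
  assumes "length x = m" "k < m" "x ! k \<noteq> 0"
  defines "E \<equiv> exps m d"
  shows "\<exists>ys. length ys = length E - 1 \<and>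
           (\<forall>y \<in> set ys. y \<in> Lambda (map (monomial x) E) \<and> vnorm y \<le> vnorm x) \<and>
           lin_indep (length E) ys"
proof -
  define F where "F = remove1 (pure_power m k d) E"
  have "distinct E" unfolding E_def by (rule distinct_exps)
  then have F: "distinct F" "set F = set E - {pure_power m k d}"
    by (simp_all add: F_def)
  have "\<forall>f\<in>set F. \<exists>j<m. j \<noteq> k \<and> 0 < f ! j"
    using exps_not_pure_power[OF _ \<open>k < m\<close>, of _ d, folded E_def] F(2) by blast
  then obtain i where i: "\<And>f. f \<in> set F \<Longrightarrow> i f < m \<and> i f \<noteq> k \<and> 0 < f ! i f"
    by metis
  define v where "v f = two_point f (exchange (i f) k f) (x ! k) (- x ! i f)" for f
  define ys where "ys = map (\<lambda>f. map (v f) E) F"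
  have "pure_power m k d \<in> set E"
    unfolding E_def using \<open>k < m\<close> by (rule pure_power_in_exps)
  then have "length ys = length E - 1"
    by (simp add: ys_def F_def length_remove1)
  moreover have "y \<in> Lambda (map (monomial x) E) \<and> vnorm y \<le> vnorm x" if "y \<in> set ys" for y
  proof -
    obtain f where f: "f \<in> set F" and y: "y = map (v f) E"
      using \<open>y \<in> set ys\<close> by (auto simp: ys_def)
    have "f \<in> set E" using f F(2) by simp
    then show ?thesis
      using exchange_vector[of f m d x "i f" k] i[OF f] assms
      by (simp add: y v_def)
  qed
  moreover have "lin_indep (length E) ys"
    unfolding ys_def
  proof (rule lin_indep_triangular[where w = "\<lambda>f. f ! k"])
    fix f g
    assume f: "f \<in> set F" and "g \<noteq> f" "v f g \<noteq> 0"
    then have "g = exchange (i f) k f"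
      by (auto simp: v_def two_point_def split: if_splits)
    moreover have "length f = m"
      using f F(2) set_exps[of m d, folded E_def] by auto
    ultimately show "f ! k < g ! k"
      using \<open>k < m\<close> by (simp add: exchange_nth_target)
  qed (use F assms in \<open>auto simp: v_def two_point_def\<close>)
  ultimately show ?thesis by blast
qed

theorem lemma5:
  fixes d n :: nat and x :: "int list"
  assumes "d \<ge> 1" and "length x = Suc n" and "primitive x"
  shows "\<exists>ys :: int list list.
           length ys = N_dn d n - 1 \<and>
           (\<forall>y \<in> set ys. y \<in> Lambda (veronese d n x) \<and> vnorm y \<le> vnorm x) \<and>
           lin_indep (N_dn d n) ys"
proof -
  obtain k where "k < Suc n" "x ! k \<noteq> 0"
    using primitive_nonzero_coord[OF \<open>primitive x\<close>] \<open>length x = Suc n\<close> by metis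
  moreover have "veronese d n x = map (monomial x) (exps (Suc n) d)"
    using \<open>length x = Suc n\<close> by (rule veronese_eq_map_monomial)
  moreover have "length (exps (Suc n) d) = N_dn d n"
    unfolding N_dn_def by (rule length_exps)
  ultimately show ?thesis
    using short_independent_lattice_vectors[OF \<open>length x = Suc n\<close>, of k d] by simp
qed

end
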